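(* Let $A \in \mathcal{M}_n(\mathbb{H})$ be nilpotent. If $W(A)$ is a (closed) disk $\mathbb{D}_{\mathbb{H}}(c,r)=\{q\in\mathbb{H}: |q-c|\le r\}$ for some $c\in\mathbb{H}$, $r\ge 0$, then its center is the origin, i.e. $W(A)=\mathbb{D}_{\mathbb{H}}(0,r)$.
   Context: $\mathbb{H}$ denotes the real quaternions with basis $1,i,j,k$, $i^2=j^2=k^2=ijk=-1$; for $q\in\mathbb{H}$, $q^*$ is its conjugate and $|q|^2=qq^*$. For $\mathbf{x}\in\mathbb{H}^n$, $\mathbf{x}^*$ is the conjugate transpose, and $\mathbb{S}_{\mathbb{H}^n}=\{\mathbf{x}\in\mathbb{H}^n:\mathbf{x}^*\mathbf{x}=1\}$. The (quaternionic) numerical range of $A\in\mathcal{M}_n(\mathbb{H})$ is $W(A)=\{\mathbf{x}^*A\mathbf{x}:\mathbf{x}\in\mathbb{S}_{\mathbb{H}^n}\}\subseteq\mathbb{H}$. *)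

theory Defs
  imports "HOL-Analysis.Analysis"
begin

datatype quat = Quat (qre: real) (qi: real) (qj: real) (qk: real)

definition qzero :: quat where "qzero = Quat 0 0 0 0"

definition qadd :: "quat \<Rightarrow> quat \<Rightarrow> quat" where
  "qadd p q = Quat (qre p + qre q) (qi p + qi q) (qj p + qj q) (qk p + qk q)"

definition qsub :: "quat \<Rightarrow> quat \<Rightarrow> quat" where
  "qsub p q = Quat (qre p - qre q) (qi p - qi q) (qj p - qj q) (qk p - qk q)"

text \<open>Hamilton product, from i^2 = j^2 = k^2 = ijk = -1.\<close>
definition qmul :: "quat \<Rightarrow> quat \<Rightarrow> quat" where
  "qmul p q = Quat
     (qre p * qre q - qi p * qi q - qj p * qj q - qk p * qk q)
     (qre p * qi q + qi p * qre q + qj p * qk q - qk p * qj q)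
     (qre p * qj q - qi p * qk q + qj p * qre q + qk p * qi q)
     (qre p * qk q + qi p * qj q - qj p * qi q + qk p * qre q)"

definition qcnj :: "quat \<Rightarrow> quat" where
  "qcnj q = Quat (qre q) (- qi q) (- qj q) (- qk q)"

definition qnorm :: "quat \<Rightarrow> real" where
  "qnorm q = sqrt ((qre q)\<^sup>2 + (qi q)\<^sup>2 + (qj q)\<^sup>2 + (qk q)\<^sup>2)"

fun qsum :: "nat \<Rightarrow> (nat \<Rightarrow> quat) \<Rightarrow> quat" where
  "qsum 0 f = qzero"
| "qsum (Suc n) f = qadd (qsum n f) (f n)"

text \<open>n x n quaternion matrices are functions nat => nat => quat, only entries with
  indices < n are relevant.\<close>
type_synonym qmat = "nat \<Rightarrow> nat \<Rightarrow> quat"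

definition qmat_mult :: "nat \<Rightarrow> qmat \<Rightarrow> qmat \<Rightarrow> qmat" where
  "qmat_mult n A B = (\<lambda>i j. qsum n (\<lambda>l. qmul (A i l) (B l j)))"

definition qmat_id :: "nat \<Rightarrow> qmat" where
  "qmat_id n = (\<lambda>i j. if i = j then Quat 1 0 0 0 else qzero)"

fun qmat_pow :: "nat \<Rightarrow> qmat \<Rightarrow> nat \<Rightarrow> qmat" where
  "qmat_pow n A 0 = qmat_id n"
| "qmat_pow n A (Suc k) = qmat_mult n (qmat_pow n A k) A"

definition qmat_nilpotent :: "nat \<Rightarrow> qmat \<Rightarrow> bool" where
  "qmat_nilpotent n A \<longleftrightarrow> (\<exists>k. \<forall>i<n. \<forall>j<n. qmat_pow n A k i j = qzero)"

definition qsphere :: "nat \<Rightarrow> (nat \<Rightarrow> quat) set" where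
  "qsphere n = {x. qsum n (\<lambda>i. qmul (qcnj (x i)) (x i)) = Quat 1 0 0 0}"

definition qnumrange :: "nat \<Rightarrow> qmat \<Rightarrow> quat set" where
  "qnumrange n A = {qsum n (\<lambda>i. qsum n (\<lambda>j. qmul (qmul (qcnj (x i)) (A i j)) (x j))) | x. x \<in> qsphere n}"

definition qdisk :: "quat \<Rightarrow> real \<Rightarrow> quat set" where
  "qdisk c r = {q. qnorm (qsub q c) \<le> r}"

end

theory Submission
  imports Defs "Jordan_Normal_Form.Determinant"
begin

text \<open>Fix an imaginary unit e among i, j, k and project W(A) onto the plane spanned by 1 and e,
  via q |-> (Re q, Re(q e^* )); the image is the planar disk of radius r around
  (Re c, Re(c e^* )). Identifying H^n with R^(4n), the support inequality of this disk in the
  direction (1 - u^2, 2u)/(1 + u^2) says that a real symmetric matrix T(u) = T0 + u T1 + u^2 T2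
  is positive semidefinite, and since the boundary point in that direction lies in W(A), T(u)
  is singular. So det T(u) vanishes for every real u, hence identically, and T(i) has a complex
  kernel vector xi + i eta. Read back in H^n as x, y, it makes x + y e a right eigenvector of A
  for the eigenvalue Re c + Re(c e^* ) e, or x - y e a right eigenvector of A^* for
  Re c - Re(c e^* ) e. Nilpotency forces that eigenvalue to vanish, so Re c = Re(c e^* ) = 0;
  letting e run through i, j, k gives c = 0.\<close>

section \<open>Quaternions as a real algebra\<close>

lemma quat_eq_iff: "p = q \<longleftrightarrow> qre p = qre q \<and> qi p = qi q \<and> qj p = qj q \<and> qk p = qk q"
  by (cases p; cases q) auto

instantiation quat :: ring_1
begin
definition zero_quat_def: "0 = Quat 0 0 0 0"
definition one_quat_def: "1 = Quat 1 0 0 0"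
definition plus_quat_def: "p + q = qadd p q"
definition minus_quat_def: "p - q = qsub p q"
definition uminus_quat_def: "- q = Quat (- qre q) (- qi q) (- qj q) (- qk q)"
definition times_quat_def: "p * q = qmul p q"
instance
  by intro_classes (auto simp: quat_eq_iff zero_quat_def one_quat_def plus_quat_def minus_quat_def
       uminus_quat_def times_quat_def qadd_def qsub_def qmul_def algebra_simps)
end

instantiation quat :: real_algebra_1
begin
definition scaleR_quat_def: "scaleR r q = Quat (r * qre q) (r * qi q) (r * qj q) (r * qk q)"
instance
  by intro_classes (auto simp: quat_eq_iff zero_quat_def one_quat_def plus_quat_def minus_quat_def
       uminus_quat_def times_quat_def qadd_def qsub_def qmul_def scaleR_quat_def algebra_simps)
end

lemma quat_sel[simp]:
  "qre 0 = 0" "qi 0 = 0" "qj 0 = 0" "qk 0 = 0"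
  "qre 1 = 1" "qi 1 = 0" "qj 1 = 0" "qk 1 = 0"
  "qre (p + q) = qre p + qre q" "qi (p + q) = qi p + qi q" "qj (p + q) = qj p + qj q" "qk (p + q) = qk p + qk q"
  "qre (p - q) = qre p - qre q" "qi (p - q) = qi p - qi q" "qj (p - q) = qj p - qj q" "qk (p - q) = qk p - qk q"
  "qre (- q) = - qre q" "qi (- q) = - qi q" "qj (- q) = - qj q" "qk (- q) = - qk q"
  "qre (r *\<^sub>R q) = r * qre q" "qi (r *\<^sub>R q) = r * qi q" "qj (r *\<^sub>R q) = r * qj q" "qk (r *\<^sub>R q) = r * qk q"
  by (simp_all add: zero_quat_def one_quat_def plus_quat_def minus_quat_def
       uminus_quat_def qadd_def qsub_def scaleR_quat_def)

lemma quat_mult_sel[simp]: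
  "qre (p * q) = qre p * qre q - qi p * qi q - qj p * qj q - qk p * qk q"
  "qi (p * q) = qre p * qi q + qi p * qre q + qj p * qk q - qk p * qj q"
  "qj (p * q) = qre p * qj q - qi p * qk q + qj p * qre q + qk p * qi q"
  "qk (p * q) = qre p * qk q + qi p * qj q - qj p * qi q + qk p * qre q"
  by (simp_all add: times_quat_def qmul_def)

lemma quat_sum_sel[simp]:
  "qre (sum f A) = (\<Sum>a\<in>A. qre (f a))" "qi (sum f A) = (\<Sum>a\<in>A. qi (f a))"
  "qj (sum f A) = (\<Sum>a\<in>A. qj (f a))" "qk (sum f A) = (\<Sum>a\<in>A. qk (f a))"
  by (induction A rule: infinite_finite_induct; simp)+

lemma of_real_quat_sel[simp]:
  "qre (of_real r) = r" "qi (of_real r) = 0" "qj (of_real r) = 0" "qk (of_real r) = 0"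
  by (simp_all add: of_real_def)

lemma qzero_eq_0: "qzero = 0" by (simp add: qzero_def zero_quat_def)
lemma qadd_eq_plus: "qadd p q = p + q" by (simp add: plus_quat_def)
lemma qsub_eq_minus: "qsub p q = p - q" by (simp add: minus_quat_def)
lemma qmul_eq_times: "qmul p q = p * q" by (simp add: times_quat_def)
lemma qsum_eq_sum: "qsum n f = (\<Sum>k<n. f k)"
  by (induction n) (simp_all add: qzero_eq_0 qadd_eq_plus)

lemma qcnj_sel[simp]:
  "qre (qcnj q) = qre q" "qi (qcnj q) = - qi q" "qj (qcnj q) = - qj q" "qk (qcnj q) = - qk q"
  by (simp_all add: qcnj_def)

lemma qcnj_mult: "qcnj (p * q) = qcnj q * qcnj p" by (simp add: quat_eq_iff)
lemma qcnj_qcnj[simp]: "qcnj (qcnj q) = q" by (simp add: quat_eq_iff)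
lemma qcnj_0_1[simp]: "qcnj 0 = 0" "qcnj 1 = 1" by (simp_all add: quat_eq_iff)
lemma qcnj_sum: "qcnj (sum f A) = (\<Sum>a\<in>A. qcnj (f a))" by (simp add: quat_eq_iff sum_negf)

lemma qre_mult_commute: "qre (p * q) = qre (q * p)" by (simp add: algebra_simps)
lemma qre_qcnj_mult3: "qre (qcnj a * X * b) = qre (qcnj b * qcnj X * a)" by (simp add: algebra_simps)
lemma qre_of_real_mult: "qre (of_real a * q) = a * qre q" by (simp add: of_real_def)

definition qnorm_sq :: "quat \<Rightarrow> real" where
  "qnorm_sq q = (qre q)\<^sup>2 + (qi q)\<^sup>2 + (qj q)\<^sup>2 + (qk q)\<^sup>2"

lemma qnorm_eq_sqrt: "qnorm q = sqrt (qnorm_sq q)" by (simp add: qnorm_def qnorm_sq_def)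
lemma qnorm_sq_mult: "qnorm_sq (p * q) = qnorm_sq p * qnorm_sq q"
  by (simp add: qnorm_sq_def power2_eq_square algebra_simps)
lemma qnorm_sq_eq_0_iff: "qnorm_sq q = 0 \<longleftrightarrow> q = 0"
  by (auto simp: qnorm_sq_def quat_eq_iff add_nonneg_eq_0_iff)
lemma qcnj_mult_self: "qcnj q * q = of_real (qnorm_sq q)"
  by (simp add: quat_eq_iff qnorm_sq_def power2_eq_square algebra_simps)

instance quat :: ring_1_no_zero_divisors
proof
  fix p q :: quat
  assume "p \<noteq> 0" "q \<noteq> 0"
  then show "p * q \<noteq> 0" by (simp flip: qnorm_sq_eq_0_iff add: qnorm_sq_mult)
qed

definition qimag_unit :: "quat \<Rightarrow> bool" where
  "qimag_unit e \<longleftrightarrow> e = Quat 0 1 0 0 \<or> e = Quat 0 0 1 0 \<or> e = Quat 0 0 0 1"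

lemma qimag_unit_facts:
  assumes "qimag_unit e"
  shows "e \<noteq> 0" "qcnj e = - e" "qre e = 0" "qre (e * qcnj e) = 1"
    "(qre q)\<^sup>2 + (qre (q * qcnj e))\<^sup>2 \<le> qnorm_sq q"
    "qnorm_sq (of_real \<alpha> + of_real \<beta> * e) = \<alpha>\<^sup>2 + \<beta>\<^sup>2"
    "qre (of_real \<alpha> + of_real \<beta> * e) = \<alpha>" "qre ((of_real \<alpha> + of_real \<beta> * e) * qcnj e) = \<beta>"
    "qre (of_real \<alpha> - of_real \<beta> * e) = \<alpha>" "qre ((of_real \<alpha> - of_real \<beta> * e) * qcnj e) = - \<beta>"
  using assms unfolding qimag_unit_def
  by (elim disjE; simp add: quat_eq_iff qnorm_sq_def qcnj_def of_real_def)+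

text \<open>With e^* = -e and e^2 = -1, adding the first equation to the second one multiplied by e on
  the right gives the first conclusion, subtracting gives the second.\<close>
lemma qimag_unit_right_eigen:
  assumes e: "qimag_unit e"
    and h1: "(1/2) *\<^sub>R (a + b) - (1/2) *\<^sub>R (c * qcnj e + d * e) = c0 *\<^sub>R x - ce *\<^sub>R y"
    and h2: "(1/2) *\<^sub>R (c + d) + (1/2) *\<^sub>R (a * qcnj e + b * e) = c0 *\<^sub>R y + ce *\<^sub>R x"
  shows "a + c * e = (x + y * e) * (of_real c0 + of_real ce * e)"
    "b - d * e = (x - y * e) * (of_real c0 - of_real ce * e)"
  using e h1 h2 unfolding qimag_unit_def
  by (elim disjE; clarsimp simp: quat_eq_iff qcnj_def algebra_simps; (intro conjI)?; linarith)+

lemma eq_0_if_add_and_diff_mult_eq_0: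
  fixes x y e :: quat
  assumes "e \<noteq> 0" "x + y * e = 0" "x - y * e = 0"
  shows "x = 0 \<and> y = 0"
proof -
  have "x + x = (x + y * e) + (x - y * e)" by simp
  then have "x = 0" using assms(2,3) by (simp add: quat_eq_iff)
  with assms show ?thesis by simp
qed

section \<open>Real coordinates of quaternion vectors\<close>

definition qbasis :: "nat \<Rightarrow> quat" where
  "qbasis s = (if s = 0 then Quat 1 0 0 0 else if s = 1 then Quat 0 1 0 0
     else if s = 2 then Quat 0 0 1 0 else Quat 0 0 0 1)"

definition qcoord :: "nat \<Rightarrow> quat \<Rightarrow> real" where
  "qcoord s q = (if s = 0 then qre q else if s = 1 then qi q else if s = 2 then qj q else qk q)"

definition qvec_of_coords :: "(nat \<Rightarrow> real) \<Rightarrow> nat \<Rightarrow> quat" where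
  "qvec_of_coords \<xi> i = Quat (\<xi> (4*i)) (\<xi> (Suc (4*i))) (\<xi> (Suc (Suc (4*i)))) (\<xi> (Suc (Suc (Suc (4*i)))))"

definition coords_of_qvec :: "(nat \<Rightarrow> quat) \<Rightarrow> nat \<Rightarrow> real" where
  "coords_of_qvec x a = qcoord (a mod 4) (x (a div 4))"

lemma sum_lessThan_4_mult:
  "(\<Sum>a<4*(n::nat). (f a :: 'a::comm_monoid_add))
     = (\<Sum>i<n. f (4*i) + f (Suc (4*i)) + f (Suc (Suc (4*i))) + f (Suc (Suc (Suc (4*i)))))"
proof (induction n)
  case 0 then show ?case by simp
next
  case (Suc n)
  have four_Suc: "4 * Suc n = Suc (Suc (Suc (Suc (4*n))))" by simp
  show ?case unfolding four_Suc sum.lessThan_Suc Suc by (simp add: add.assoc)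
qed

lemma div_mod_4_mult[simp]:
  "(4*i) div 4 = (i::nat)" "(4*i) mod 4 = (0::nat)"
  "Suc (4*i) div 4 = i" "Suc (4*i) mod 4 = 1"
  "Suc (Suc (4*i)) div 4 = i" "Suc (Suc (4*i)) mod 4 = 2"
  "Suc (Suc (Suc (4*i))) div 4 = i" "Suc (Suc (Suc (4*i))) mod 4 = 3"
  by presburger+

lemma qcoord_add: "qcoord s (p + q) = qcoord s p + qcoord s q" by (simp add: qcoord_def)
lemma qcoord_diff: "qcoord s (p - q) = qcoord s p - qcoord s q" by (simp add: qcoord_def)
lemma qcoord_scaleR: "qcoord s (r *\<^sub>R q) = r * qcoord s q" by (simp add: qcoord_def)
lemma qcoord_sum: "qcoord s (sum f A) = (\<Sum>a\<in>A. qcoord s (f a))" by (simp add: qcoord_def)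

lemma qcoord_eq_qre: "s < 4 \<Longrightarrow> qcoord s q = qre (qcnj (qbasis s) * q)"
  by (cases s; cases "s - 1"; cases "s - 2"; auto simp: qcoord_def qbasis_def)

lemma quat_eq_qcoordI:
  assumes "\<And>s. s < 4 \<Longrightarrow> qcoord s p = qcoord s q"
  shows "p = q"
  using assms[of 0] assms[of 1] assms[of 2] assms[of 3] by (simp add: qcoord_def quat_eq_iff)

lemma qvec_of_coords_expand:
  "qvec_of_coords \<xi> j = \<xi> (4*j) *\<^sub>R qbasis 0 + \<xi> (Suc (4*j)) *\<^sub>R qbasis 1
     + \<xi> (Suc (Suc (4*j))) *\<^sub>R qbasis 2 + \<xi> (Suc (Suc (Suc (4*j)))) *\<^sub>R qbasis 3"
  by (simp add: quat_eq_iff qvec_of_coords_def qbasis_def)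

lemma qvec_of_coords_of_qvec[simp]: "qvec_of_coords (coords_of_qvec x) = x"
  by (rule ext) (simp add: quat_eq_iff qvec_of_coords_def coords_of_qvec_def qcoord_def)

lemma qcoord_qvec_of_coords: "s < 4 \<Longrightarrow> qcoord s (qvec_of_coords \<xi> i) = \<xi> (4*i + s)"
  by (cases s; cases "s - 1"; cases "s - 2"; auto simp: qcoord_def qvec_of_coords_def)

lemma sum_sq_coords: "(\<Sum>a<4*n. (\<xi> a)\<^sup>2) = (\<Sum>i<n. qnorm_sq (qvec_of_coords \<xi> i))"
  unfolding sum_lessThan_4_mult by (simp add: qnorm_sq_def qvec_of_coords_def add.assoc)

lemma sum_coords_times_qcoord:
  "(\<Sum>a<4*n. \<xi> a * qcoord (a mod 4) (V (a div 4))) = (\<Sum>i<n. qre (qcnj (qvec_of_coords \<xi> i) * V i))"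
  unfolding sum_lessThan_4_mult by (simp add: qvec_of_coords_def qcoord_def)

definition qmat_vec :: "nat \<Rightarrow> qmat \<Rightarrow> (nat \<Rightarrow> quat) \<Rightarrow> nat \<Rightarrow> quat" where
  "qmat_vec n A x i = (\<Sum>j<n. A i j * x j)"

definition qmat_adj_vec :: "nat \<Rightarrow> qmat \<Rightarrow> (nat \<Rightarrow> quat) \<Rightarrow> nat \<Rightarrow> quat" where
  "qmat_adj_vec n A x i = (\<Sum>j<n. qcnj (A j i) * x j)"

definition qform :: "nat \<Rightarrow> qmat \<Rightarrow> (nat \<Rightarrow> quat) \<Rightarrow> quat" where
  "qform n A x = (\<Sum>i<n. \<Sum>j<n. qcnj (x i) * A i j * x j)"

lemma qnumrange_eq_image: "qnumrange n A = qform n A ` qsphere n"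
  unfolding qnumrange_def qform_def by (auto simp: qsum_eq_sum qmul_eq_times)

lemma qsphere_iff: "x \<in> qsphere n \<longleftrightarrow> (\<Sum>i<n. qnorm_sq (x i)) = 1"
proof -
  have "qsum n (\<lambda>i. qmul (qcnj (x i)) (x i)) = of_real (\<Sum>i<n. qnorm_sq (x i))"
    by (simp add: qsum_eq_sum qmul_eq_times qcnj_mult_self)
  moreover have "Quat 1 0 0 0 = (of_real 1 :: quat)" by (simp add: quat_eq_iff)
  ultimately show ?thesis unfolding qsphere_def by (simp only: mem_Collect_eq of_real_eq_iff)
qed

lemma qmat_vec_cong: "(\<And>j. j < n \<Longrightarrow> u j = u' j) \<Longrightarrow> qmat_vec n M u i = qmat_vec n M u' i"
  unfolding qmat_vec_def by (intro sum.cong) auto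
lemma qmat_adj_vec_cong: "(\<And>j. j < n \<Longrightarrow> u j = u' j) \<Longrightarrow> qmat_adj_vec n M u i = qmat_adj_vec n M u' i"
  unfolding qmat_adj_vec_def by (intro sum.cong) auto
lemma qmat_vec_mult_right: "qmat_vec n M (\<lambda>j. u j * q) i = qmat_vec n M u i * q"
  unfolding qmat_vec_def by (simp add: sum_distrib_right mult.assoc)
lemma qmat_adj_vec_mult_right: "qmat_adj_vec n M (\<lambda>j. u j * q) i = qmat_adj_vec n M u i * q"
  unfolding qmat_adj_vec_def by (simp add: sum_distrib_right mult.assoc)
lemma qmat_vec_add: "qmat_vec n M (\<lambda>j. u j + v j) i = qmat_vec n M u i + qmat_vec n M v i"
  unfolding qmat_vec_def by (simp add: distrib_left sum.distrib)
lemma qmat_adj_vec_diff: "qmat_adj_vec n M (\<lambda>j. u j - v j) i = qmat_adj_vec n M u i - qmat_adj_vec n M v i"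
  unfolding qmat_adj_vec_def by (simp add: right_diff_distrib sum_subtractf)

lemma qmat_vec_qmat_mult: "qmat_vec n (qmat_mult n M N) u i = qmat_vec n M (qmat_vec n N u) i"
proof -
  have "qmat_vec n (qmat_mult n M N) u i = (\<Sum>j<n. \<Sum>l<n. M i l * (N l j * u j))"
    by (simp add: qmat_vec_def qmat_mult_def qsum_eq_sum qmul_eq_times sum_distrib_right mult.assoc)
  also have "\<dots> = (\<Sum>l<n. \<Sum>j<n. M i l * (N l j * u j))" by (rule sum.swap)
  also have "\<dots> = qmat_vec n M (qmat_vec n N u) i" by (simp add: qmat_vec_def sum_distrib_left)
  finally show ?thesis .
qed

lemma qmat_adj_vec_qmat_mult: "qmat_adj_vec n (qmat_mult n M N) u i = qmat_adj_vec n N (qmat_adj_vec n M u) i"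
proof -
  have "qmat_adj_vec n (qmat_mult n M N) u i = (\<Sum>j<n. \<Sum>l<n. qcnj (N l i) * (qcnj (M j l) * u j))"
    by (simp add: qmat_adj_vec_def qmat_mult_def qsum_eq_sum qmul_eq_times qcnj_sum qcnj_mult
        sum_distrib_right mult.assoc)
  also have "\<dots> = (\<Sum>l<n. \<Sum>j<n. qcnj (N l i) * (qcnj (M j l) * u j))" by (rule sum.swap)
  also have "\<dots> = qmat_adj_vec n N (qmat_adj_vec n M u) i" by (simp add: qmat_adj_vec_def sum_distrib_left)
  finally show ?thesis .
qed

lemma qmat_id_eq: "qmat_id n i j = (if i = j then 1 else 0)"
  by (simp add: qmat_id_def one_quat_def qzero_eq_0)

lemma qmat_vec_id:
  assumes "i < n"
  shows "qmat_vec n (qmat_id n) u i = u i"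
proof -
  have row: "(\<lambda>j. qmat_id n i j * u j) = (\<lambda>j. if j = i then u j else 0)" by (auto simp: qmat_id_eq)
  show ?thesis using assms unfolding qmat_vec_def row by simp
qed

lemma qmat_adj_vec_id:
  assumes "i < n"
  shows "qmat_adj_vec n (qmat_id n) u i = u i"
proof -
  have col: "(\<lambda>j. qcnj (qmat_id n j i) * u j) = (\<lambda>j. if j = i then u j else 0)" by (auto simp: qmat_id_eq)
  show ?thesis using assms unfolding qmat_adj_vec_def col by simp
qed

lemma qmat_nilpotent_right_eigenvalue_eq_0:
  assumes "qmat_nilpotent n A" and eigen: "\<And>i. i < n \<Longrightarrow> qmat_vec n A u i = u i * g"
    and "i < n" "u i \<noteq> 0"
  shows "g = 0"
proof -
  have pow: "qmat_vec n (qmat_pow n A k) u j = u j * g ^ k" if "j < n" for k j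
    using that
  proof (induction k arbitrary: j)
    case 0 then show ?case by (simp add: qmat_vec_id)
  next
    case (Suc k)
    have "qmat_vec n (qmat_pow n A (Suc k)) u j = qmat_vec n (qmat_pow n A k) (qmat_vec n A u) j"
      by (simp add: qmat_vec_qmat_mult)
    also have "\<dots> = qmat_vec n (qmat_pow n A k) (\<lambda>l. u l * g) j"
      by (rule qmat_vec_cong) (simp add: eigen)
    also have "\<dots> = u j * g ^ Suc k"
      using Suc by (simp add: qmat_vec_mult_right power_Suc2 mult.assoc del: power_Suc)
    finally show ?case .
  qed
  obtain k where "\<forall>i<n. \<forall>j<n. qmat_pow n A k i j = 0"
    using assms(1) unfolding qmat_nilpotent_def qzero_eq_0 by blast
  then have "qmat_vec n (qmat_pow n A k) u i = 0" using \<open>i < n\<close> by (simp add: qmat_vec_def)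
  then have "u i * g ^ k = 0" using pow \<open>i < n\<close> by simp
  then show ?thesis using \<open>u i \<noteq> 0\<close> by simp
qed

lemma qmat_nilpotent_adj_right_eigenvalue_eq_0:
  assumes "qmat_nilpotent n A" and eigen: "\<And>i. i < n \<Longrightarrow> qmat_adj_vec n A u i = u i * g"
    and "i < n" "u i \<noteq> 0"
  shows "g = 0"
proof -
  have pow: "qmat_adj_vec n (qmat_pow n A k) u j = u j * g ^ k" if "j < n" for k j
    using that
  proof (induction k arbitrary: j)
    case 0 then show ?case by (simp add: qmat_adj_vec_id)
  next
    case (Suc k)
    have "qmat_adj_vec n (qmat_pow n A (Suc k)) u j = qmat_adj_vec n A (qmat_adj_vec n (qmat_pow n A k) u) j"
      by (simp add: qmat_adj_vec_qmat_mult)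
    also have "\<dots> = qmat_adj_vec n A (\<lambda>l. u l * g ^ k) j"
      by (rule qmat_adj_vec_cong) (simp add: Suc.IH)
    also have "\<dots> = u j * g ^ Suc k"
      using eigen Suc.prems by (simp add: qmat_adj_vec_mult_right mult.assoc)
    finally show ?case .
  qed
  obtain k where "\<forall>i<n. \<forall>j<n. qmat_pow n A k i j = 0"
    using assms(1) unfolding qmat_nilpotent_def qzero_eq_0 by blast
  then have "qmat_adj_vec n (qmat_pow n A k) u i = 0" using \<open>i < n\<close> by (simp add: qmat_adj_vec_def)
  then have "u i * g ^ k = 0" using pow \<open>i < n\<close> by simp
  then show ?thesis using \<open>u i \<noteq> 0\<close> by simp
qed

section \<open>Real quadratic forms\<close>

definition quad_form :: "nat \<Rightarrow> (nat \<Rightarrow> nat \<Rightarrow> real) \<Rightarrow> (nat \<Rightarrow> real) \<Rightarrow> real" where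
  "quad_form m S z = (\<Sum>a<m. z a * (\<Sum>b<m. S a b * z b))"

lemma quad_form_scale: "quad_form m S (\<lambda>a. s * z a) = s\<^sup>2 * quad_form m S z"
  unfolding quad_form_def by (simp add: sum_distrib_left power2_eq_square algebra_simps)

lemma quad_form_add_mult:
  assumes sym: "\<And>a b. a < m \<Longrightarrow> b < m \<Longrightarrow> S a b = S b a"
  shows "quad_form m S (\<lambda>a. z a + t * y a)
    = quad_form m S z + 2 * t * (\<Sum>a<m. y a * (\<Sum>b<m. S a b * z b)) + t\<^sup>2 * quad_form m S y"
proof -
  have swap: "(\<Sum>a<m. z a * (\<Sum>b<m. S a b * y b)) = (\<Sum>a<m. y a * (\<Sum>b<m. S a b * z b))"
  proof -
    have "(\<Sum>a<m. z a * (\<Sum>b<m. S a b * y b)) = (\<Sum>a<m. \<Sum>b<m. z a * S a b * y b)"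
      by (simp add: sum_distrib_left mult.assoc)
    also have "\<dots> = (\<Sum>b<m. \<Sum>a<m. z a * S a b * y b)" by (rule sum.swap)
    also have "\<dots> = (\<Sum>b<m. \<Sum>a<m. y b * (S b a * z a))"
      by (intro sum.cong refl) (simp add: sym)
    also have "\<dots> = (\<Sum>b<m. y b * (\<Sum>a<m. S b a * z a))" by (simp add: sum_distrib_left)
    finally show ?thesis .
  qed
  have row: "(\<Sum>b<m. S a b * (z b + t * y b)) = (\<Sum>b<m. S a b * z b) + t * (\<Sum>b<m. S a b * y b)" for a
    by (simp add: distrib_left sum.distrib sum_distrib_left mult.left_commute)
  have summand: "(z a + t * y a) * (\<Sum>b<m. S a b * (z b + t * y b))
      = z a * (\<Sum>b<m. S a b * z b) + t * (z a * (\<Sum>b<m. S a b * y b))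
        + t * (y a * (\<Sum>b<m. S a b * z b)) + t\<^sup>2 * (y a * (\<Sum>b<m. S a b * y b))" for a
    unfolding row by (simp add: algebra_simps power2_eq_square)
  show ?thesis
    unfolding quad_form_def summand sum.distrib sum_distrib_left[symmetric] swap by simp
qed

text \<open>If the symmetric form is positive semidefinite and vanishes at x, then Sx = 0: otherwise
  moving from x a little in the direction -Sx makes the form negative.\<close>
lemma psd_quad_form_zero_imp_kernel:
  assumes sym: "\<And>a b. a < m \<Longrightarrow> b < m \<Longrightarrow> S a b = S b a"
    and psd: "\<And>z. 0 \<le> quad_form m S z"
    and zero: "quad_form m S x = 0"
    and "a < m"
  shows "(\<Sum>b<m. S a b * x b) = 0"
proof -
  define y where "y a = (\<Sum>b<m. S a b * x b)" for a
  define Y where "Y = (\<Sum>a<m. y a * y a)"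
  define K where "K = quad_form m S y"
  have K: "K \<ge> 0" unfolding K_def by (rule psd)
  have Y: "Y \<ge> 0" unfolding Y_def by (simp add: sum_nonneg)
  have along: "quad_form m S (\<lambda>a. x a + t * y a) = 2 * t * Y + t\<^sup>2 * K" for t
    using quad_form_add_mult[OF sym, where z=x and t=t and y=y] zero unfolding Y_def K_def y_def by simp
  have "Y = 0"
  proof (rule ccontr)
    assume "Y \<noteq> 0"
    with Y have "Y > 0" by simp
    define t where "t = - Y / (K + 1)"
    have t: "t * (K + 1) = - Y" unfolding t_def using K by simp
    have "(2 * t * Y + t\<^sup>2 * K) * (K + 1)\<^sup>2 = 2 * Y * (t * (K + 1)) * (K + 1) + (t * (K + 1))\<^sup>2 * K"
      by (simp add: algebra_simps power2_eq_square)
    also have "\<dots> = Y\<^sup>2 * (- K - 2)" unfolding t by (simp add: algebra_simps power2_eq_square)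
    also have "\<dots> < 0" using K \<open>Y > 0\<close> by (intro mult_pos_neg) auto
    finally have "(2 * t * Y + t\<^sup>2 * K) * (K + 1)\<^sup>2 < 0" .
    then have "2 * t * Y + t\<^sup>2 * K < 0" by (metis mult_nonneg_nonneg not_le zero_le_power2)
    then show False using psd[of "\<lambda>a. x a + t * y a"] along[of t] by simp
  qed
  then have "\<forall>a\<in>{..<m}. y a * y a = 0" unfolding Y_def
    by (subst (asm) sum_nonneg_eq_0_iff) auto
  then show ?thesis using \<open>a < m\<close> unfolding y_def by simp
qed

lemma sum_diag_mult:
  "a < (m::nat) \<Longrightarrow> (\<Sum>b<m. (if a = b then l else 0) * f b) = (l * f a :: real)"
proof -
  assume "a < m"
  have delta: "(\<lambda>b. (if a = b then l else 0) * f b) = (\<lambda>b. if b = a then l * f b else 0)" by auto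
  show ?thesis unfolding delta using \<open>a < m\<close> by simp
qed

lemma quad_form_diag_diff:
  "quad_form m (\<lambda>a b. (if a = b then l else 0) - \<alpha> * S a b - \<beta> * S' a b) z
     = l * (\<Sum>a<m. (z a)\<^sup>2) - \<alpha> * quad_form m S z - \<beta> * quad_form m S' z"
proof -
  have row: "(\<Sum>b<m. ((if a = b then l else 0) - \<alpha> * S a b - \<beta> * S' a b) * z b)
      = l * z a - \<alpha> * (\<Sum>b<m. S a b * z b) - \<beta> * (\<Sum>b<m. S' a b * z b)" if "a < m" for a
    using that by (simp add: left_diff_distrib sum_subtractf sum_distrib_left mult.assoc sum_diag_mult)
  have "quad_form m (\<lambda>a b. (if a = b then l else 0) - \<alpha> * S a b - \<beta> * S' a b) z
      = (\<Sum>a<m. l * (z a)\<^sup>2 - \<alpha> * (z a * (\<Sum>b<m. S a b * z b)) - \<beta> * (z a * (\<Sum>b<m. S' a b * z b)))"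
    unfolding quad_form_def
    by (intro sum.cong refl) (simp add: row power2_eq_square right_diff_distrib mult.left_commute)
  also have "\<dots> = l * (\<Sum>a<m. (z a)\<^sup>2) - \<alpha> * quad_form m S z - \<beta> * quad_form m S' z"
    by (simp add: quad_form_def sum_subtractf sum_distrib_left)
  finally show ?thesis .
qed

section \<open>The real matrices of Re(x^* A x) and Re(x^* A x e^* )\<close>

text \<open>Symmetrized so that quad_form (4 n) of them, evaluated at \<xi>, is Re(x^* A x) resp.
  Re(x^* A x e^* ) for x = qvec_of_coords \<xi>.\<close>

definition re_form_matrix :: "qmat \<Rightarrow> nat \<Rightarrow> nat \<Rightarrow> real" where
  "re_form_matrix A a b = qcoord (a mod 4)
     ((1/2) *\<^sub>R ((A (a div 4) (b div 4) + qcnj (A (b div 4) (a div 4))) * qbasis (b mod 4)))"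

definition slice_form_matrix :: "qmat \<Rightarrow> quat \<Rightarrow> nat \<Rightarrow> nat \<Rightarrow> real" where
  "slice_form_matrix A e a b = qcoord (a mod 4) ((1/2) *\<^sub>R (A (a div 4) (b div 4) * (qbasis (b mod 4) * qcnj e)
     + qcnj (A (b div 4) (a div 4)) * qbasis (b mod 4) * e))"

lemma re_form_matrix_block:
  "re_form_matrix A a (4*j) * \<xi> (4*j) + re_form_matrix A a (Suc (4*j)) * \<xi> (Suc (4*j))
     + re_form_matrix A a (Suc (Suc (4*j))) * \<xi> (Suc (Suc (4*j)))
     + re_form_matrix A a (Suc (Suc (Suc (4*j)))) * \<xi> (Suc (Suc (Suc (4*j))))
   = qcoord (a mod 4) ((1/2) *\<^sub>R ((A (a div 4) j + qcnj (A j (a div 4))) * qvec_of_coords \<xi> j))"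
  unfolding re_form_matrix_def qvec_of_coords_expand
  by (simp only: div_mod_4_mult distrib_left mult_scaleR_right scaleR_add_right qcoord_add qcoord_scaleR)
    (simp add: algebra_simps)

lemma slice_form_matrix_block:
  "slice_form_matrix A e a (4*j) * \<xi> (4*j) + slice_form_matrix A e a (Suc (4*j)) * \<xi> (Suc (4*j))
     + slice_form_matrix A e a (Suc (Suc (4*j))) * \<xi> (Suc (Suc (4*j)))
     + slice_form_matrix A e a (Suc (Suc (Suc (4*j)))) * \<xi> (Suc (Suc (Suc (4*j))))
   = qcoord (a mod 4) ((1/2) *\<^sub>R (A (a div 4) j * (qvec_of_coords \<xi> j * qcnj e)
       + qcnj (A j (a div 4)) * qvec_of_coords \<xi> j * e))"
  unfolding slice_form_matrix_def qvec_of_coords_expand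
  by (simp only: div_mod_4_mult distrib_left distrib_right mult_scaleR_right mult_scaleR_left
      scaleR_add_right qcoord_add qcoord_scaleR)
    (simp add: algebra_simps)

lemma re_form_matrix_row:
  "(\<Sum>b<4*n. re_form_matrix A a b * \<xi> b) = qcoord (a mod 4)
     ((1/2) *\<^sub>R (qmat_vec n A (qvec_of_coords \<xi>) (a div 4) + qmat_adj_vec n A (qvec_of_coords \<xi>) (a div 4)))"
  unfolding sum_lessThan_4_mult re_form_matrix_block qcoord_sum[symmetric] qmat_vec_def qmat_adj_vec_def
    scaleR_sum_right[symmetric] sum.distrib[symmetric]
  by (simp add: distrib_right)

lemma slice_form_matrix_row:
  "(\<Sum>b<4*n. slice_form_matrix A e a b * \<xi> b) = qcoord (a mod 4)
     ((1/2) *\<^sub>R (qmat_vec n A (qvec_of_coords \<xi>) (a div 4) * qcnj e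
       + qmat_adj_vec n A (qvec_of_coords \<xi>) (a div 4) * e))"
  unfolding sum_lessThan_4_mult slice_form_matrix_block qcoord_sum[symmetric] qmat_vec_def qmat_adj_vec_def
    scaleR_sum_right[symmetric] sum.distrib[symmetric] sum_distrib_right
  by (simp add: mult.assoc)

lemma re_form_matrix_sym: "re_form_matrix A a b = re_form_matrix A b a"
  unfolding re_form_matrix_def qcoord_eq_qre[OF mod_less_divisor[OF zero_less_numeral]]
  by (simp add: algebra_simps)

lemma slice_form_matrix_sym: "slice_form_matrix A e a b = slice_form_matrix A e b a"
proof -
  have swap: "qre (qcnj (qbasis s) * (X * (qbasis t * qcnj e)))
      = qre (qcnj (qbasis t) * (qcnj X * qbasis s * e))" for s t X
  proof -
    have "qre (qcnj (qbasis s) * (X * (qbasis t * qcnj e))) = qre (qcnj (qbasis s) * X * qbasis t * qcnj e)"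
      by (simp only: mult.assoc)
    also have "\<dots> = qre (qcnj e * (qcnj (qbasis s) * X * qbasis t))" by (rule qre_mult_commute)
    also have "\<dots> = qre (qcnj (qcnj (qbasis t) * qcnj X * qbasis s * e))"
      by (simp only: qcnj_mult qcnj_qcnj mult.assoc)
    also have "\<dots> = qre (qcnj (qbasis t) * (qcnj X * qbasis s * e))" by (simp only: qcnj_sel mult.assoc)
    finally show ?thesis .
  qed
  show ?thesis
    unfolding slice_form_matrix_def qcoord_eq_qre[OF mod_less_divisor[OF zero_less_numeral]]
      scaleR_right_distrib mult_scaleR_right distrib_left
    using swap[of "a mod 4" "A (a div 4) (b div 4)" "b mod 4"] swap[of "b mod 4" "A (b div 4) (a div 4)" "a mod 4"]
    by (simp add: mult.assoc)
qed

lemma qre_qform_eq_vec: "qre (qform n A x) = (\<Sum>i<n. qre (qcnj (x i) * qmat_vec n A x i))"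
  by (simp add: qmat_vec_def qform_def sum_distrib_left mult.assoc)

lemma qre_qform_eq_adj_vec: "qre (qform n A x) = (\<Sum>i<n. qre (qcnj (x i) * qmat_adj_vec n A x i))"
proof -
  have "(\<Sum>i<n. qre (qcnj (x i) * qmat_adj_vec n A x i)) = (\<Sum>i<n. \<Sum>j<n. qre (qcnj (x i) * qcnj (A j i) * x j))"
    by (simp add: qmat_adj_vec_def sum_distrib_left mult.assoc)
  also have "\<dots> = (\<Sum>i<n. \<Sum>j<n. qre (qcnj (x j) * A j i * x i))"
    by (intro sum.cong refl) (simp add: algebra_simps)
  also have "\<dots> = qre (qform n A x)" unfolding qform_def quat_sum_sel by (rule sum.swap)
  finally show ?thesis by simp
qed

lemma quad_form_re_form_matrix: "quad_form (4*n) (re_form_matrix A) \<xi> = qre (qform n A (qvec_of_coords \<xi>))"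
proof -
  let ?x = "qvec_of_coords \<xi>"
  have "quad_form (4*n) (re_form_matrix A) \<xi>
     = (\<Sum>i<n. qre (qcnj (?x i) * ((1/2) *\<^sub>R (qmat_vec n A ?x i + qmat_adj_vec n A ?x i))))"
    unfolding quad_form_def re_form_matrix_row by (rule sum_coords_times_qcoord)
  also have "\<dots> = (1/2) * (\<Sum>i<n. qre (qcnj (?x i) * qmat_vec n A ?x i))
      + (1/2) * (\<Sum>i<n. qre (qcnj (?x i) * qmat_adj_vec n A ?x i))"
    by (simp add: distrib_left sum.distrib sum_distrib_left del: quat_mult_sel)
  also have "\<dots> = qre (qform n A ?x)"
    using qre_qform_eq_vec[of n A ?x] qre_qform_eq_adj_vec[of n A ?x] by simp
  finally show ?thesis .
qed

lemma quad_form_slice_form_matrix: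
  "quad_form (4*n) (slice_form_matrix A e) \<xi> = qre (qform n A (qvec_of_coords \<xi>) * qcnj e)"
proof -
  let ?x = "qvec_of_coords \<xi>"
  have adj: "(\<Sum>i<n. qre (qcnj (?x i) * (qmat_adj_vec n A ?x i * e))) = qre (qform n A ?x * qcnj e)"
  proof -
    have "(\<Sum>i<n. qre (qcnj (?x i) * (qmat_adj_vec n A ?x i * e)))
        = (\<Sum>i<n. \<Sum>j<n. qre (qcnj (?x i) * qcnj (A j i) * (?x j * e)))"
      by (simp add: qmat_adj_vec_def sum_distrib_left sum_distrib_right mult.assoc del: quat_mult_sel)
    also have "\<dots> = (\<Sum>i<n. \<Sum>j<n. qre (qcnj (?x j) * A j i * ?x i * qcnj e))"
    proof (intro sum.cong refl)
      fix i j
      have "qre (qcnj (?x i) * qcnj (A j i) * (?x j * e))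
          = qre (qcnj (?x j * e) * qcnj (qcnj (A j i)) * ?x i)"
        by (rule qre_qcnj_mult3)
      also have "\<dots> = qre (qcnj e * (qcnj (?x j) * A j i * ?x i))"
        by (simp only: qcnj_mult qcnj_qcnj mult.assoc)
      also have "\<dots> = qre (qcnj (?x j) * A j i * ?x i * qcnj e)" by (rule qre_mult_commute)
      finally show "qre (qcnj (?x i) * qcnj (A j i) * (?x j * e)) = qre (qcnj (?x j) * A j i * ?x i * qcnj e)" .
    qed
    also have "\<dots> = (\<Sum>j<n. \<Sum>i<n. qre (qcnj (?x j) * A j i * ?x i * qcnj e))" by (rule sum.swap)
    also have "\<dots> = qre (qform n A ?x * qcnj e)" by (simp add: qform_def sum_distrib_right)
    finally show ?thesis .
  qed
  have "quad_form (4*n) (slice_form_matrix A e) \<xi>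
     = (\<Sum>i<n. qre (qcnj (?x i) * ((1/2) *\<^sub>R (qmat_vec n A ?x i * qcnj e + qmat_adj_vec n A ?x i * e))))"
    unfolding quad_form_def slice_form_matrix_row by (rule sum_coords_times_qcoord)
  also have "\<dots> = (1/2) * (\<Sum>i<n. qre (qcnj (?x i) * (qmat_vec n A ?x i * qcnj e)))
      + (1/2) * (\<Sum>i<n. qre (qcnj (?x i) * (qmat_adj_vec n A ?x i * e)))"
    by (simp add: distrib_left sum.distrib sum_distrib_left del: quat_mult_sel)
  also have "\<dots> = qre (qform n A ?x * qcnj e)"
    unfolding adj by (simp add: qmat_vec_def qform_def sum_distrib_left sum_distrib_right mult.assoc del: quat_mult_sel)
  finally show ?thesis .
qed

section \<open>Quadratic matrix pencils singular on the reals\<close>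

lemma det_mat_eq_0_iff_kernel:
  fixes f :: "nat \<Rightarrow> nat \<Rightarrow> 'a::idom"
  shows "det (mat m m (\<lambda>(a, b). f a b)) = 0
    \<longleftrightarrow> (\<exists>v. (\<exists>a<m. v a \<noteq> 0) \<and> (\<forall>a<m. (\<Sum>b<m. f a b * v b) = 0))"
proof -
  let ?M = "mat m m (\<lambda>(a, b). f a b)"
  have row: "(?M *\<^sub>v w) $ a = (\<Sum>b<m. f a b * w $ b)" if "a < m" "w \<in> carrier_vec m" for w a
    using that by (auto simp: scalar_prod_def lessThan_atLeast0 intro!: sum.cong)
  have "(\<exists>w. w \<in> carrier_vec m \<and> w \<noteq> 0\<^sub>v m \<and> ?M *\<^sub>v w = 0\<^sub>v m)
      \<longleftrightarrow> (\<exists>v. (\<exists>a<m. v a \<noteq> 0) \<and> (\<forall>a<m. (\<Sum>b<m. f a b * v b) = 0))"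
  proof
    assume "\<exists>w. w \<in> carrier_vec m \<and> w \<noteq> 0\<^sub>v m \<and> ?M *\<^sub>v w = 0\<^sub>v m"
    then obtain w where w: "w \<in> carrier_vec m" "w \<noteq> 0\<^sub>v m" "?M *\<^sub>v w = 0\<^sub>v m" by blast
    have "\<exists>a<m. w $ a \<noteq> 0" using w(1,2) by (metis carrier_vecD eq_vecI index_zero_vec)
    moreover have "(\<Sum>b<m. f a b * w $ b) = 0" if "a < m" for a
      using row[OF that w(1)] w(3) that by simp
    ultimately show "\<exists>v. (\<exists>a<m. v a \<noteq> 0) \<and> (\<forall>a<m. (\<Sum>b<m. f a b * v b) = 0)" by blast
  next
    assume "\<exists>v. (\<exists>a<m. v a \<noteq> 0) \<and> (\<forall>a<m. (\<Sum>b<m. f a b * v b) = 0)"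
    then obtain v where v: "\<exists>a<m. v a \<noteq> 0" "\<forall>a<m. (\<Sum>b<m. f a b * v b) = 0" by blast
    have "vec m v \<noteq> 0\<^sub>v m" using v(1) by (metis index_vec index_zero_vec(1))
    moreover have "?M *\<^sub>v vec m v = 0\<^sub>v m"
      using row[of _ "vec m v"] v(2) by (intro eq_vecI) auto
    ultimately show "\<exists>w. w \<in> carrier_vec m \<and> w \<noteq> 0\<^sub>v m \<and> ?M *\<^sub>v w = 0\<^sub>v m"
      using vec_carrier by blast
  qed
  then show ?thesis using det_0_iff_vec_prod_zero[of ?M m] by simp
qed

lemma poly_eq_0_if_real_roots:
  fixes p :: "complex poly"
  assumes "\<And>u::real. poly p (of_real u) = 0"
  shows "p = 0"
proof (rule ccontr)
  assume "p \<noteq> 0"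
  then have "finite {z. poly p z = 0}" by (rule poly_roots_finite)
  moreover have "range complex_of_real \<subseteq> {z. poly p z = 0}" using assms by auto
  moreover have "infinite (range complex_of_real)"
    using infinite_UNIV_char_0 finite_imageD inj_of_real by blast
  ultimately show False using finite_subset by blast
qed

text \<open>det (k0 + z k1 + z^2 k2) is a polynomial in z vanishing at every real z, hence
  identically; evaluate at z = i.\<close>
lemma quadratic_pencil_kernel_at_i:
  fixes k0 k1 k2 :: "nat \<Rightarrow> nat \<Rightarrow> real"
  assumes singular: "\<And>u::real. \<exists>\<xi>. (\<exists>a<m. \<xi> a \<noteq> 0)
      \<and> (\<forall>a<m. (\<Sum>b<m. (k0 a b + u * k1 a b + u\<^sup>2 * k2 a b) * \<xi> b) = 0)"
  shows "\<exists>v::nat \<Rightarrow> complex. (\<exists>a<m. v a \<noteq> 0) \<and>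
     (\<forall>a<m. (\<Sum>b<m. (of_real (k0 a b) + \<i> * of_real (k1 a b) - of_real (k2 a b)) * v b) = 0)"
proof -
  define P :: "complex poly mat" where
    "P = mat m m (\<lambda>(a, b). [:of_real (k0 a b), of_real (k1 a b), of_real (k2 a b):])"
  define pencil where "pencil z a b = of_real (k0 a b) + z * of_real (k1 a b) + z\<^sup>2 * of_real (k2 a b)"
    for z :: complex and a b
  have det_pencil: "det (mat m m (\<lambda>(a, b). pencil z a b)) = poly (det P) z" for z
  proof -
    interpret eval: comm_ring_hom "\<lambda>f. poly f z" by unfold_locales auto
    have "map_mat (\<lambda>f. poly f z) P = mat m m (\<lambda>(a, b). pencil z a b)"
      by (auto simp: P_def pencil_def power2_eq_square algebra_simps)
    then show ?thesis using eval.hom_det[of P] by simp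
  qed
  have "poly (det P) (of_real u) = 0" for u
  proof -
    obtain \<xi> where "\<exists>a<m. \<xi> a \<noteq> 0"
      and kernel: "\<forall>a<m. (\<Sum>b<m. (k0 a b + u * k1 a b + u\<^sup>2 * k2 a b) * \<xi> b) = 0"
      using singular by blast
    moreover have "(\<Sum>b<m. pencil (of_real u) a b * of_real (\<xi> b)) = 0" if "a < m" for a
    proof -
      have "(\<Sum>b<m. pencil (of_real u) a b * of_real (\<xi> b))
          = of_real (\<Sum>b<m. (k0 a b + u * k1 a b + u\<^sup>2 * k2 a b) * \<xi> b)"
        by (simp add: pencil_def)
      then show ?thesis using kernel that by simp
    qed
    ultimately have "\<exists>v. (\<exists>a<m. v a \<noteq> 0) \<and> (\<forall>a<m. (\<Sum>b<m. pencil (of_real u) a b * v b) = 0)"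
      by (intro exI[of _ "\<lambda>b. of_real (\<xi> b)"]) auto
    then show ?thesis
      unfolding det_pencil[symmetric] det_mat_eq_0_iff_kernel[where f = "pencil (of_real u)"] .
  qed
  then have "det P = 0" by (rule poly_eq_0_if_real_roots)
  then have "det (mat m m (\<lambda>(a, b). pencil \<i> a b)) = 0" by (simp add: det_pencil)
  moreover have "pencil \<i> a b = of_real (k0 a b) + \<i> * of_real (k1 a b) - of_real (k2 a b)" for a b
    by (simp add: pencil_def power2_i)
  ultimately show ?thesis unfolding det_mat_eq_0_iff_kernel[where f = "pencil \<i>"] by simp
qed

section \<open>Support inequalities of the projected disk\<close>

lemma circle_param_bound:
  fixes X Y r u :: real
  assumes "X\<^sup>2 + Y\<^sup>2 \<le> r\<^sup>2" "r \<ge> 0"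
  shows "(1 - u\<^sup>2) * X + 2 * u * Y \<le> r * (1 + u\<^sup>2)"
proof -
  have "((1 - u\<^sup>2) * X + 2 * u * Y)\<^sup>2 + ((1 - u\<^sup>2) * Y - 2 * u * X)\<^sup>2 = (1 + u\<^sup>2)\<^sup>2 * (X\<^sup>2 + Y\<^sup>2)"
    by (simp add: power2_eq_square algebra_simps)
  also have "\<dots> \<le> (1 + u\<^sup>2)\<^sup>2 * r\<^sup>2" using assms(1) by (intro mult_left_mono) auto
  also have "\<dots> = (r * (1 + u\<^sup>2))\<^sup>2" by (simp add: power_mult_distrib)
  finally have "((1 - u\<^sup>2) * X + 2 * u * Y)\<^sup>2 \<le> (r * (1 + u\<^sup>2))\<^sup>2"
    using zero_le_power2[of "(1 - u\<^sup>2) * Y - 2 * u * X"] by linarith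
  then show ?thesis by (rule power2_le_imp_le) (use assms(2) in simp)
qed

text \<open>The quadratic form of this matrix at \<xi> is |\<xi>|^2 (1 + u^2) h(u) - <(1 - u^2, 2u), w>, where
  w = (Re x^* A x, Re(x^* A x e^* )) for x = qvec_of_coords \<xi> and h(u) is the support function
  of the planar disk around (Re c, Re(c e^* )) of radius r in the direction
  (1 - u^2, 2u)/(1 + u^2).\<close>

definition support_matrix :: "qmat \<Rightarrow> quat \<Rightarrow> quat \<Rightarrow> real \<Rightarrow> real \<Rightarrow> nat \<Rightarrow> nat \<Rightarrow> real" where
  "support_matrix A e c r u a b =
     (if a = b then (1 - u\<^sup>2) * qre c + 2 * u * qre (c * qcnj e) + r * (1 + u\<^sup>2) else 0)
     - (1 - u\<^sup>2) * re_form_matrix A a b - 2 * u * slice_form_matrix A e a b"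

lemma support_matrix_sym: "support_matrix A e c r u a b = support_matrix A e c r u b a"
  by (cases "a = b") (simp_all add: support_matrix_def re_form_matrix_sym[of A a b]
      slice_form_matrix_sym[of A e a b])

lemma quad_form_support_matrix:
  "quad_form (4*n) (support_matrix A e c r u) z
     = ((1 - u\<^sup>2) * qre c + 2 * u * qre (c * qcnj e) + r * (1 + u\<^sup>2)) * (\<Sum>a<4*n. (z a)\<^sup>2)
       - (1 - u\<^sup>2) * qre (qform n A (qvec_of_coords z))
       - 2 * u * qre (qform n A (qvec_of_coords z) * qcnj e)"
  unfolding support_matrix_def[abs_def] quad_form_diag_diff quad_form_re_form_matrix
    quad_form_slice_form_matrix ..

lemma qform_support_inequality:
  assumes "r \<ge> 0" "qnumrange n A \<subseteq> qdisk c r" "qimag_unit e" "x \<in> qsphere n"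
  shows "(1 - u\<^sup>2) * qre (qform n A x) + 2 * u * qre (qform n A x * qcnj e)
    \<le> (1 - u\<^sup>2) * qre c + 2 * u * qre (c * qcnj e) + r * (1 + u\<^sup>2)"
proof -
  let ?w = "qform n A x"
  have "qnorm (?w - c) \<le> r"
    using assms(2,4) by (auto simp: qnumrange_eq_image qdisk_def qsub_eq_minus)
  then have "qnorm_sq (?w - c) \<le> r\<^sup>2" unfolding qnorm_eq_sqrt by (rule sqrt_le_D)
  then have "(qre ?w - qre c)\<^sup>2 + (qre (?w * qcnj e) - qre (c * qcnj e))\<^sup>2 \<le> r\<^sup>2"
    using qimag_unit_facts(5)[OF assms(3), of "?w - c"] by (simp add: left_diff_distrib)
  then have "(1 - u\<^sup>2) * (qre ?w - qre c) + 2 * u * (qre (?w * qcnj e) - qre (c * qcnj e)) \<le> r * (1 + u\<^sup>2)"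
    using assms(1) by (rule circle_param_bound)
  then show ?thesis by (simp add: algebra_simps)
qed

lemma support_matrix_psd:
  assumes "r \<ge> 0" "qnumrange n A \<subseteq> qdisk c r" "qimag_unit e"
  shows "0 \<le> quad_form (4*n) (support_matrix A e c r u) z"
proof (cases "(\<Sum>a<4*n. (z a)\<^sup>2) = 0")
  case True
  then have "\<forall>a\<in>{..<4*n}. (z a)\<^sup>2 = 0" by (subst (asm) sum_nonneg_eq_0_iff) auto
  then show ?thesis unfolding quad_form_def by simp
next
  case False
  then have pos: "(\<Sum>a<4*n. (z a)\<^sup>2) > 0" by (simp add: sum_nonneg order.not_eq_order_implies_strict)
  define s where "s = 1 / sqrt (\<Sum>a<4*n. (z a)\<^sup>2)"
  have "s > 0" unfolding s_def using pos by simp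
  have unit: "(\<Sum>a<4*n. (s * z a)\<^sup>2) = 1"
    unfolding s_def power_mult_distrib sum_distrib_left[symmetric] using pos by (simp add: power_divide)
  then have "qvec_of_coords (\<lambda>a. s * z a) \<in> qsphere n" by (simp add: qsphere_iff flip: sum_sq_coords)
  from qform_support_inequality[OF assms this, where u = u]
  have "0 \<le> quad_form (4*n) (support_matrix A e c r u) (\<lambda>a. s * z a)"
    unfolding quad_form_support_matrix unit mult_1_right by linarith
  then show ?thesis unfolding quad_form_scale using \<open>s > 0\<close> by (simp add: zero_le_mult_iff)
qed

text \<open>The minimum 0 is attained at the preimage in the unit sphere of the boundary point
  c + r ((1 - u^2) + 2u e)/(1 + u^2) of the disk.\<close>
lemma support_matrix_quad_form_attains_0:
  assumes r: "r \<ge> 0" and disk: "qdisk c r \<subseteq> qnumrange n A" and e: "qimag_unit e"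
  shows "\<exists>\<xi>. (\<exists>a<4*n. \<xi> a \<noteq> 0) \<and> quad_form (4*n) (support_matrix A e c r u) \<xi> = 0"
proof -
  have D: "1 + u\<^sup>2 \<noteq> 0" using zero_le_power2[of u] by linarith
  define \<alpha> where "\<alpha> = r * (1 - u\<^sup>2) / (1 + u\<^sup>2)"
  define \<beta> where "\<beta> = r * (2 * u) / (1 + u\<^sup>2)"
  define w where "w = c + of_real \<alpha> + of_real \<beta> * e"
  have circle: "(1 - u\<^sup>2)\<^sup>2 + (2 * u)\<^sup>2 = (1 + u\<^sup>2)\<^sup>2" by (simp add: power2_eq_square algebra_simps)
  have "\<alpha>\<^sup>2 + \<beta>\<^sup>2 = r\<^sup>2 * ((1 - u\<^sup>2)\<^sup>2 + (2 * u)\<^sup>2) / (1 + u\<^sup>2)\<^sup>2"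
    unfolding \<alpha>_def \<beta>_def by (simp add: power_divide power_mult_distrib add_divide_distrib distrib_left)
  also have "\<dots> = r\<^sup>2" unfolding circle using D by simp
  finally have "qnorm_sq (w - c) = r\<^sup>2" unfolding w_def using qimag_unit_facts(6)[OF e] by simp
  then have "w \<in> qdisk c r" unfolding qdisk_def qnorm_eq_sqrt using r by (simp add: qsub_eq_minus)
  then obtain x where x: "x \<in> qsphere n" and xw: "qform n A x = w"
    using disk by (auto simp: qnumrange_eq_image)
  define \<xi> where "\<xi> = coords_of_qvec x"
  have unit: "(\<Sum>a<4*n. (\<xi> a)\<^sup>2) = 1"
    unfolding \<xi>_def sum_sq_coords qvec_of_coords_of_qvec using x qsphere_iff by simp
  then have nonzero: "\<exists>a<4*n. \<xi> a \<noteq> 0" by (metis (no_types, lifting) power_zero_numeral sum.neutral zero_neq_one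
      lessThan_iff)
  have "(1 - u\<^sup>2) * \<alpha> + 2 * u * \<beta> = r * (1 + u\<^sup>2)"
  proof -
    have "(1 - u\<^sup>2) * \<alpha> + 2 * u * \<beta> = r * ((1 - u\<^sup>2)\<^sup>2 + (2 * u)\<^sup>2) / (1 + u\<^sup>2)"
      unfolding \<alpha>_def \<beta>_def by (simp add: power2_eq_square add_divide_distrib distrib_left mult.left_commute)
    also have "\<dots> = r * (1 + u\<^sup>2)" unfolding circle using D by (simp add: power2_eq_square)
    finally show ?thesis .
  qed
  moreover have "qre w = qre c + \<alpha>" "qre (w * qcnj e) = qre (c * qcnj e) + \<beta>"
    unfolding w_def using qimag_unit_facts(3,4)[OF e]
    by (simp_all add: distrib_right mult.assoc qre_of_real_mult del: quat_mult_sel)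
  ultimately have "quad_form (4*n) (support_matrix A e c r u) \<xi> = 0"
    unfolding quad_form_support_matrix unit unfolding \<xi>_def qvec_of_coords_of_qvec xw
    by (simp add: algebra_simps del: quat_mult_sel)
  with nonzero show ?thesis by blast
qed

lemma support_matrix_kernel:
  assumes "r \<ge> 0" "qnumrange n A = qdisk c r" "qimag_unit e"
  shows "\<exists>\<xi>. (\<exists>a<4*n. \<xi> a \<noteq> 0) \<and> (\<forall>a<4*n. (\<Sum>b<4*n. support_matrix A e c r u a b * \<xi> b) = 0)"
proof -
  obtain \<xi> where "\<exists>a<4*n. \<xi> a \<noteq> 0" and "quad_form (4*n) (support_matrix A e c r u) \<xi> = 0"
    using support_matrix_quad_form_attains_0 assms by blast
  with psd_quad_form_zero_imp_kernel[OF support_matrix_sym support_matrix_psd] assms show ?thesis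
    by blast
qed

section \<open>Right eigenvectors from the support matrices\<close>

lemma support_pencil_complex_kernel:
  assumes "r \<ge> 0" "qnumrange n A = qdisk c r" "qimag_unit e"
  shows "\<exists>\<xi> \<eta>. (\<exists>a<4*n. \<xi> a \<noteq> 0 \<or> \<eta> a \<noteq> 0) \<and> (\<forall>a<4*n.
     (\<Sum>b<4*n. re_form_matrix A a b * \<xi> b) - (\<Sum>b<4*n. slice_form_matrix A e a b * \<eta> b)
       = qre c * \<xi> a - qre (c * qcnj e) * \<eta> a \<and>
     (\<Sum>b<4*n. re_form_matrix A a b * \<eta> b) + (\<Sum>b<4*n. slice_form_matrix A e a b * \<xi> b)
       = qre c * \<eta> a + qre (c * qcnj e) * \<xi> a)"
proof -
  define m where "m = 4*n"
  define c0 where "c0 = qre c"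
  define ce where "ce = qre (c * qcnj e)"
  define P where "P = re_form_matrix A"
  define Q where "Q = slice_form_matrix A e"
  define k0 where "k0 a b = (if a = b then c0 + r else 0) - P a b" for a b
  define k1 where "k1 a b = (if a = b then 2 * ce else 0) - 2 * Q a b" for a b
  define k2 where "k2 a b = (if a = b then r - c0 else 0) + P a b" for a b
  have pencil: "k0 a b + u * k1 a b + u\<^sup>2 * k2 a b = support_matrix A e c r u a b" for u a b
    unfolding k0_def k1_def k2_def support_matrix_def c0_def ce_def P_def Q_def
    by (cases "a = b") (simp_all add: algebra_simps)
  obtain v where "\<exists>a<m. v a \<noteq> 0"
    and kernel: "\<forall>a<m. (\<Sum>b<m. (of_real (k0 a b) + \<i> * of_real (k1 a b) - of_real (k2 a b)) * v b) = 0"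
    using quadratic_pencil_kernel_at_i[of m k0 k1 k2] support_matrix_kernel[OF assms]
    unfolding pencil m_def by blast
  moreover have "(\<Sum>b<m. P a b * Re (v b)) - (\<Sum>b<m. Q a b * Im (v b)) = c0 * Re (v a) - ce * Im (v a)
      \<and> (\<Sum>b<m. P a b * Im (v b)) + (\<Sum>b<m. Q a b * Re (v b)) = c0 * Im (v a) + ce * Re (v a)"
    if a: "a < m" for a
  proof -
    let ?S = "\<Sum>b<m. (of_real (k0 a b) + \<i> * of_real (k1 a b) - of_real (k2 a b)) * v b"
    have "Re ?S = (\<Sum>b<m. (if a = b then 2 * c0 else 0) * Re (v b) - 2 * (P a b * Re (v b))
        - (if a = b then 2 * ce else 0) * Im (v b) + 2 * (Q a b * Im (v b)))"
      unfolding Re_sum by (intro sum.cong refl) (simp add: k0_def k1_def k2_def algebra_simps)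
    also have "\<dots> = 2 * c0 * Re (v a) - 2 * (\<Sum>b<m. P a b * Re (v b)) - 2 * ce * Im (v a)
        + 2 * (\<Sum>b<m. Q a b * Im (v b))"
      using a by (simp add: sum.distrib sum_subtractf sum_distrib_left sum_diag_mult)
    finally have re: "\<dots> = 0" using kernel a by simp
    have "Im ?S = (\<Sum>b<m. (if a = b then 2 * c0 else 0) * Im (v b) - 2 * (P a b * Im (v b))
        + (if a = b then 2 * ce else 0) * Re (v b) - 2 * (Q a b * Re (v b)))"
      unfolding Im_sum by (intro sum.cong refl) (simp add: k0_def k1_def k2_def algebra_simps)
    also have "\<dots> = 2 * c0 * Im (v a) - 2 * (\<Sum>b<m. P a b * Im (v b)) + 2 * ce * Re (v a)
        - 2 * (\<Sum>b<m. Q a b * Re (v b))"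
      using a by (simp add: sum.distrib sum_subtractf sum_distrib_left sum_diag_mult)
    finally have im: "\<dots> = 0" using kernel a by simp
    from re im show ?thesis by linarith
  qed
  ultimately show ?thesis
    unfolding m_def c0_def ce_def P_def Q_def
    by (intro exI[of _ "\<lambda>b. Re (v b)"] exI[of _ "\<lambda>b. Im (v b)"]) (auto simp: complex_eq_iff)
qed

lemma coord_equations_imp_quat_equations:
  assumes eqs: "\<forall>a<4*n.
     (\<Sum>b<4*n. re_form_matrix A a b * \<xi> b) - (\<Sum>b<4*n. slice_form_matrix A e a b * \<eta> b) = c0 * \<xi> a - ce * \<eta> a \<and>
     (\<Sum>b<4*n. re_form_matrix A a b * \<eta> b) + (\<Sum>b<4*n. slice_form_matrix A e a b * \<xi> b) = c0 * \<eta> a + ce * \<xi> a"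
    and "i < n"
  defines "x \<equiv> qvec_of_coords \<xi>" and "y \<equiv> qvec_of_coords \<eta>"
  shows "(1/2) *\<^sub>R (qmat_vec n A x i + qmat_adj_vec n A x i)
      - (1/2) *\<^sub>R (qmat_vec n A y i * qcnj e + qmat_adj_vec n A y i * e) = c0 *\<^sub>R x i - ce *\<^sub>R y i"
    and "(1/2) *\<^sub>R (qmat_vec n A y i + qmat_adj_vec n A y i)
      + (1/2) *\<^sub>R (qmat_vec n A x i * qcnj e + qmat_adj_vec n A x i * e) = c0 *\<^sub>R y i + ce *\<^sub>R x i"
proof -
  have index: "4*i + s < 4*n" "(4*i + s) div 4 = i" "(4*i + s) mod 4 = s" if "s < 4" for s
    using that \<open>i < n\<close> by auto
  have rows: "(\<Sum>b<4*n. re_form_matrix A (4*i + s) b * \<zeta> b)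
        = qcoord s ((1/2) *\<^sub>R (qmat_vec n A (qvec_of_coords \<zeta>) i + qmat_adj_vec n A (qvec_of_coords \<zeta>) i))"
      "(\<Sum>b<4*n. slice_form_matrix A e (4*i + s) b * \<zeta> b)
        = qcoord s ((1/2) *\<^sub>R (qmat_vec n A (qvec_of_coords \<zeta>) i * qcnj e
            + qmat_adj_vec n A (qvec_of_coords \<zeta>) i * e))"
    if "s < 4" for s \<zeta>
    using that by (simp_all add: re_form_matrix_row slice_form_matrix_row index[OF that])
  show "(1/2) *\<^sub>R (qmat_vec n A x i + qmat_adj_vec n A x i)
      - (1/2) *\<^sub>R (qmat_vec n A y i * qcnj e + qmat_adj_vec n A y i * e) = c0 *\<^sub>R x i - ce *\<^sub>R y i"
  proof (rule quat_eq_qcoordI)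
    fix s :: nat assume s: "s < 4"
    show "qcoord s ((1/2) *\<^sub>R (qmat_vec n A x i + qmat_adj_vec n A x i)
        - (1/2) *\<^sub>R (qmat_vec n A y i * qcnj e + qmat_adj_vec n A y i * e)) = qcoord s (c0 *\<^sub>R x i - ce *\<^sub>R y i)"
      using eqs[rule_format, OF index(1)[OF s]] rows[OF s, of \<xi>] rows[OF s, of \<eta>]
      unfolding qcoord_diff qcoord_scaleR x_def y_def qcoord_qvec_of_coords[OF s] by linarith
  qed
  show "(1/2) *\<^sub>R (qmat_vec n A y i + qmat_adj_vec n A y i)
      + (1/2) *\<^sub>R (qmat_vec n A x i * qcnj e + qmat_adj_vec n A x i * e) = c0 *\<^sub>R y i + ce *\<^sub>R x i"
  proof (rule quat_eq_qcoordI)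
    fix s :: nat assume s: "s < 4"
    show "qcoord s ((1/2) *\<^sub>R (qmat_vec n A y i + qmat_adj_vec n A y i)
        + (1/2) *\<^sub>R (qmat_vec n A x i * qcnj e + qmat_adj_vec n A x i * e)) = qcoord s (c0 *\<^sub>R y i + ce *\<^sub>R x i)"
      using eqs[rule_format, OF index(1)[OF s]] rows[OF s, of \<xi>] rows[OF s, of \<eta>]
      unfolding qcoord_add qcoord_scaleR x_def y_def qcoord_qvec_of_coords[OF s] by linarith
  qed
qed

lemma disk_numrange_right_eigenvectors:
  assumes "r \<ge> 0" "qnumrange n A = qdisk c r" and e: "qimag_unit e"
  obtains u w i where "i < n" "u i \<noteq> 0 \<or> w i \<noteq> 0"
    "\<And>i. i < n \<Longrightarrow> qmat_vec n A u i = u i * (of_real (qre c) + of_real (qre (c * qcnj e)) * e)"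
    "\<And>i. i < n \<Longrightarrow> qmat_adj_vec n A w i = w i * (of_real (qre c) - of_real (qre (c * qcnj e)) * e)"
proof -
  obtain \<xi> \<eta> where nonzero: "\<exists>a<4*n. \<xi> a \<noteq> 0 \<or> \<eta> a \<noteq> 0" and eqs: "\<forall>a<4*n.
     (\<Sum>b<4*n. re_form_matrix A a b * \<xi> b) - (\<Sum>b<4*n. slice_form_matrix A e a b * \<eta> b)
       = qre c * \<xi> a - qre (c * qcnj e) * \<eta> a \<and>
     (\<Sum>b<4*n. re_form_matrix A a b * \<eta> b) + (\<Sum>b<4*n. slice_form_matrix A e a b * \<xi> b)
       = qre c * \<eta> a + qre (c * qcnj e) * \<xi> a"
    using support_pencil_complex_kernel[OF assms] by blast
  define x where "x = qvec_of_coords \<xi>"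
  define y where "y = qvec_of_coords \<eta>"
  note quat_eqs = coord_equations_imp_quat_equations[OF eqs, folded x_def y_def]
  obtain a where "a < 4*n" "\<xi> a \<noteq> 0 \<or> \<eta> a \<noteq> 0" using nonzero by blast
  moreover have "qcoord (a mod 4) (x (a div 4)) = \<xi> a" "qcoord (a mod 4) (y (a div 4)) = \<eta> a"
    unfolding x_def y_def qcoord_qvec_of_coords[OF mod_less_divisor[OF zero_less_numeral]] by simp_all
  moreover have "qcoord s 0 = 0" for s by (simp add: qcoord_def)
  ultimately have "a div 4 < n" "x (a div 4) \<noteq> 0 \<or> y (a div 4) \<noteq> 0" by auto
  moreover have "x (a div 4) + y (a div 4) * e \<noteq> 0 \<or> x (a div 4) - y (a div 4) * e \<noteq> 0"
    using calculation(2) eq_0_if_add_and_diff_mult_eq_0[OF qimag_unit_facts(1)[OF e]] by blast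
  ultimately show ?thesis
    using that[of "a div 4" "\<lambda>j. x j + y j * e" "\<lambda>j. x j - y j * e"]
      qimag_unit_right_eigen[OF e quat_eqs]
    by (simp add: qmat_vec_add qmat_vec_mult_right qmat_adj_vec_diff qmat_adj_vec_mult_right)
qed

lemma nilpotent_disk_center_coords:
  assumes "qmat_nilpotent n A" "r \<ge> 0" "qnumrange n A = qdisk c r" and e: "qimag_unit e"
  shows "qre c = 0 \<and> qre (c * qcnj e) = 0"
proof -
  obtain u w i where "i < n" "u i \<noteq> 0 \<or> w i \<noteq> 0"
    and "\<And>i. i < n \<Longrightarrow> qmat_vec n A u i = u i * (of_real (qre c) + of_real (qre (c * qcnj e)) * e)"
    and "\<And>i. i < n \<Longrightarrow> qmat_adj_vec n A w i = w i * (of_real (qre c) - of_real (qre (c * qcnj e)) * e)"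
    using disk_numrange_right_eigenvectors[OF assms(2-4)] by metis
  then consider "of_real (qre c) + of_real (qre (c * qcnj e)) * e = 0"
    | "of_real (qre c) - of_real (qre (c * qcnj e)) * e = 0"
    using qmat_nilpotent_right_eigenvalue_eq_0[OF assms(1)]
      qmat_nilpotent_adj_right_eigenvalue_eq_0[OF assms(1)] by blast
  then show ?thesis
  proof cases
    case 1
    then show ?thesis using qimag_unit_facts(7,8)[OF e, of "qre c" "qre (c * qcnj e)"] unfolding 1 by simp
  next
    case 2
    then show ?thesis using qimag_unit_facts(9,10)[OF e, of "qre c" "qre (c * qcnj e)"] unfolding 2 by simp
  qed
qed

theorem theorem3p1:
  fixes n :: nat and A :: qmat and c :: quat and r :: real
  assumes "qmat_nilpotent n A"
    and "r \<ge> 0"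
    and "qnumrange n A = qdisk c r"
  shows "c = qzero \<and> qnumrange n A = qdisk qzero r"
proof -
  have "qimag_unit (Quat 0 1 0 0)" "qimag_unit (Quat 0 0 1 0)" "qimag_unit (Quat 0 0 0 1)"
    by (simp_all add: qimag_unit_def)
  then have "qre c = 0" "qre (c * qcnj (Quat 0 1 0 0)) = 0"
    "qre (c * qcnj (Quat 0 0 1 0)) = 0" "qre (c * qcnj (Quat 0 0 0 1)) = 0"
    using nilpotent_disk_center_coords[OF assms] by blast+
  then have "c = qzero" by (simp add: qzero_def quat_eq_iff)
  with assms(3) show ?thesis by simp
qed

end
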